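(* Suppose there exists $r>0$ such that $\phi(x)>r$ for all $x>0$. For each integer $N\ge1$ let $V(N)$ denote the optimal value of the problem: minimize $Y_{N-1}^+$ over $d_0,\dots,d_{N-1}\ge0$ subject to $\sum_{k=0}^{N-1}\mathrm{BED}_O(d_k)\le c$. Then there exists a finite optimal number of fractions $N^*$, i.e. $\min_{N\in\{1,2,\dots\}}V(N)$ is attained at some finite $N^*$.
   Context: Model: Tumor parameters $\alpha_T>0$, $\beta_T>0$, $[\alpha/\beta]_T=\alpha_T/\beta_T$; organ-at-risk (OAR) parameter $[\alpha/\beta]_O>0$; sparing factor $0<\gamma<1$; OAR limit $c>0$. Define $\mathrm{BED}_T(d)=d\left(1+\frac{d}{[\alpha/\beta]_T}\right)$ and $\mathrm{BED}_O(d)=\gamma d\left(1+\frac{\gamma d}{[\alpha/\beta]_O}\right)$. Tumor growth between doses follows $\frac{1}{x}\frac{dx}{dt}=\phi(x)$, with $\phi:(0,\infty)\to\mathbb{R}$ continuous and non-increasing. Doses $d_0,\dots,d_{N-1}$ are delivered at times $0,1,\dots,N-1$. With $Y=\ln(\text{number of tumor cells})/\alpha_T$, let $F$ be the one-day growth map for $Y$ under the ODE. With initial cell number $X_0>0$ (fixed, independent of $N$) and $Y_0^-=\ln(X_0)/\alpha_T$: $Y_0^+=Y_0^--\mathrm{BED}_T(d_0)$, $Y_{i+1}^+=F(Y_i^+)-\mathrm{BED}_T(d_{i+1})$ for $i=0,\dots,N-2$. *)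

theory Defs
  imports "HOL-Analysis.Analysis"
begin

definition BED_T :: "real \<Rightarrow> real \<Rightarrow> real" where
  "BED_T abT d = d * (1 + d / abT)"

definition BED_O :: "real \<Rightarrow> real \<Rightarrow> real \<Rightarrow> real" where
  "BED_O gamma abO d = gamma * d * (1 + gamma * d / abO)"

definition growth_map :: "real \<Rightarrow> (real \<Rightarrow> real) \<Rightarrow> real \<Rightarrow> real" where
  "growth_map alphaT phi y =
     (THE z. \<exists>X. X 0 = exp (alphaT * y) \<and>
        (\<forall>t\<in>{0..1}. X t > 0 \<and>
           (X has_real_derivative (X t * phi (X t))) (at t within {0..1})) \<and>
        z = ln (X 1) / alphaT)"

fun Yplus :: "(real \<Rightarrow> real) \<Rightarrow> real \<Rightarrow> real \<Rightarrow> (nat \<Rightarrow> real) \<Rightarrow> nat \<Rightarrow> real" where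
  "Yplus F abT Y0 d 0 = Y0 - BED_T abT (d 0)"
| "Yplus F abT Y0 d (Suc i) = F (Yplus F abT Y0 d i) - BED_T abT (d (Suc i))"

definition optval :: "(real \<Rightarrow> real) \<Rightarrow> real \<Rightarrow> real \<Rightarrow> real \<Rightarrow> real \<Rightarrow> real \<Rightarrow> nat \<Rightarrow> real" where
  "optval F abT Y0 gamma abO c N =
     Inf {Yplus F abT Y0 d (N - 1) | d.
            (\<forall>k<N. d k \<ge> 0) \<and> (\<Sum>k<N. BED_O gamma abO (d k)) \<le> c}"

end

theory Submission
  imports Defs "HOL-Complex_Analysis.Conformal_Mappings"
begin

text \<open>Since \<open>\<phi> > r\<close>, one day of growth raises \<open>Y\<close> by at least \<open>r/\<alpha>\<^sub>T\<close>, while the OAR budget bounds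
  the total tumour BED that any feasible schedule can deliver by a constant multiple of \<open>c\<close>.
  Hence \<open>V(N)\<close> grows at least linearly in \<open>N\<close>, so it exceeds \<open>V(1)\<close> for all large \<open>N\<close> and the
  minimum is taken over finitely many \<open>N\<close>. The only delicate point is that \<open>growth_map\<close> is a
  definite description: the ODE must be shown to have a unique solution on \<open>[0,1]\<close>. Uniqueness
  follows from monotonicity of \<open>\<phi>\<close>; existence from separation of variables in \<open>u = ln x\<close>.\<close>

definition growth_solution :: "(real \<Rightarrow> real) \<Rightarrow> (real \<Rightarrow> real) \<Rightarrow> bool" where
  "growth_solution phi X \<longleftrightarrow>
     (\<forall>t\<in>{0..1}. X t > 0 \<and> (X has_real_derivative X t * phi (X t)) (at t within {0..1}))"

lemma nonneg_derivative_within_imp_le: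
  fixes f f' :: "real \<Rightarrow> real"
  assumes "a \<le> b"
    and deriv: "\<And>t. t \<in> {a..b} \<Longrightarrow> (f has_real_derivative f' t) (at t within {a..b})"
    and nonneg: "\<And>t. t \<in> {a..b} \<Longrightarrow> f' t \<ge> 0"
  shows "f a \<le> f b"
proof (rule DERIV_nonneg_imp_increasing_open[OF \<open>a \<le> b\<close>])
  show "continuous_on {a..b} f" using deriv by (rule DERIV_continuous_on)
  fix x assume "a < x" "x < b"
  then show "\<exists>y. DERIV f x :> y \<and> y \<ge> 0"
    using deriv[of x] nonneg[of x] by (auto simp: at_within_Icc_at)
qed

lemma growth_solution_ln_deriv:
  assumes "growth_solution phi X" and "t \<in> {0..1}"
  shows "((\<lambda>t. ln (X t)) has_real_derivative phi (X t)) (at t within {0..1})"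
proof -
  have "X t > 0" and "(X has_real_derivative X t * phi (X t)) (at t within {0..1})"
    using assms by (auto simp: growth_solution_def)
  then have "((\<lambda>t. ln (X t)) has_real_derivative 1 / X t * (X t * phi (X t))) (at t within {0..1})"
    by (auto intro!: derivative_eq_intros)
  then show ?thesis using \<open>X t > 0\<close> by simp
qed

lemma growth_solution_ln_increase:
  assumes "\<And>x. x > 0 \<Longrightarrow> r \<le> phi x" and X: "growth_solution phi X"
  shows "ln (X 0) + r \<le> ln (X 1)"
proof -
  have "ln (X 0) - r * 0 \<le> ln (X 1) - r * 1"
  proof (rule nonneg_derivative_within_imp_le[where f = "\<lambda>t. ln (X t) - r * t"])
    fix t :: real assume t: "t \<in> {0..1}"
    have "((\<lambda>t. r * t) has_real_derivative r) (at t within {0..1})"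
      by (auto intro!: derivative_eq_intros)
    with growth_solution_ln_deriv[OF X t]
    show "((\<lambda>t. ln (X t) - r * t) has_real_derivative phi (X t) - r) (at t within {0..1})"
      by (rule DERIV_diff)
    show "phi (X t) - r \<ge> 0" using assms t by (simp add: growth_solution_def)
  qed simp
  then show ?thesis by simp
qed

text \<open>For two solutions, \<open>w = ln X - ln Y\<close> satisfies \<open>w (\<phi> X - \<phi> Y) \<le> 0\<close> because \<open>\<phi>\<close> is
  non-increasing, so \<open>w\<^sup>2\<close> is non-increasing and vanishes identically.\<close>
lemma growth_solution_unique:
  assumes antitone: "\<And>x y. 0 < x \<Longrightarrow> x \<le> y \<Longrightarrow> phi y \<le> phi x"
    and X: "growth_solution phi X" and Y: "growth_solution phi Y" and "X 0 = Y 0"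
  shows "X 1 = Y 1"
proof -
  define w where "w t = ln (X t) - ln (Y t)" for t
  have pos: "X t > 0" "Y t > 0" if "t \<in> {0..1}" for t
    using X Y that by (auto simp: growth_solution_def)
  have "- (w 0)\<^sup>2 \<le> - (w 1)\<^sup>2"
  proof (rule nonneg_derivative_within_imp_le[where f = "\<lambda>t. - (w t)\<^sup>2"])
    fix t :: real assume t: "t \<in> {0..1}"
    have "(w has_real_derivative phi (X t) - phi (Y t)) (at t within {0..1})"
      unfolding w_def using growth_solution_ln_deriv[OF X t] growth_solution_ln_deriv[OF Y t]
      by (rule DERIV_diff)
    then show "((\<lambda>t. - (w t)\<^sup>2) has_real_derivative - (2 * w t * (phi (X t) - phi (Y t))))
        (at t within {0..1})"
      by (auto intro!: derivative_eq_intros)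
    show "- (2 * w t * (phi (X t) - phi (Y t))) \<ge> 0"
    proof (cases "X t \<le> Y t")
      case True
      then have "w t \<le> 0" "phi (Y t) \<le> phi (X t)" using pos[OF t] antitone by (auto simp: w_def)
      then show ?thesis by (simp add: mult_nonpos_nonneg)
    next
      case False
      then have "w t \<ge> 0" "phi (X t) \<le> phi (Y t)" using pos[OF t] antitone by (auto simp: w_def)
      then show ?thesis by (simp add: mult_nonneg_nonpos)
    qed
  qed simp
  moreover have "w 0 = 0" using \<open>X 0 = Y 0\<close> by (simp add: w_def)
  ultimately have "w 1 = 0" by simp
  then show ?thesis using pos[of 1] by (simp add: w_def)
qed

text \<open>Separation of variables: \<open>U t = G\<^sup>-\<^sup>1 (G u\<^sub>0 + t)\<close> with \<open>G' = 1/h\<close>. The bound on \<open>h\<close> above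
  \<open>u\<^sub>0\<close> makes \<open>G\<close> gain at least \<open>1\<close> on \<open>[u\<^sub>0, u\<^sub>0 + M]\<close>, so the solution does not blow up before \<open>t = 1\<close>.\<close>
lemma autonomous_ode_solution_exists:
  fixes h :: "real \<Rightarrow> real" and u0 M :: real
  assumes cont: "continuous_on UNIV h" and pos: "\<And>u. h u > 0"
    and bounded: "\<And>u. u0 \<le> u \<Longrightarrow> h u \<le> M"
  shows "\<exists>U. U 0 = u0 \<and> (\<forall>t\<in>{0..1}. (U has_real_derivative h (U t)) (at t within {0..1}))"
proof -
  define S where "S = {u0 - 1<..}"
  define G where "G x = integral {u0 - 1..x} (\<lambda>u. 1 / h u)" for x
  have M: "M > 0" using pos[of u0] bounded[of u0] by simp
  have nonzero: "h u \<noteq> 0" for u using pos[of u] by simp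
  have cont_inv: "continuous_on A (\<lambda>u. 1 / h u)" for A
    using nonzero by (intro continuous_intros continuous_on_subset[OF cont]) auto
  have G_deriv: "DERIV G x :> 1 / h x" if "x \<in> S" for x
  proof -
    have "(G has_real_derivative 1 / h x) (at x within {u0 - 1..x + 1})"
      unfolding G_def using that by (intro integral_has_real_derivative cont_inv) (auto simp: S_def)
    then show ?thesis using that by (simp add: at_within_Icc_at S_def)
  qed
  have G_mono: "strict_mono_on S G"
  proof (rule strict_mono_onI)
    fix x y assume "x \<in> S" "y \<in> S" "x < y"
    moreover have "\<exists>D. DERIV G z :> D \<and> D > 0" if "z \<in> S" for z
      using G_deriv[OF that] pos[of z] by auto
    ultimately show "G x < G y"
      by (intro DERIV_pos_imp_increasing[OF \<open>x < y\<close>]) (auto simp: S_def)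
  qed
  have G_gap: "G u0 + 1 \<le> G (u0 + M)"
  proof -
    have "integral {u0 - 1..u0} (\<lambda>u. 1 / h u) + integral {u0..u0 + M} (\<lambda>u. 1 / h u) = G (u0 + M)"
      unfolding G_def using M
      by (intro Henstock_Kurzweil_Integration.integral_combine integrable_continuous_interval cont_inv)
        auto
    moreover have "integral {u0..u0 + M} (\<lambda>_. 1 / M) \<le> integral {u0..u0 + M} (\<lambda>u. 1 / h u)"
      using bounded pos M
      by (intro integral_le integrable_continuous_interval cont_inv continuous_intros)
        (auto intro: frac_le)
    ultimately show ?thesis using M by (simp add: G_def)
  qed
  define g where "g = inv_into S G"
  have g_deriv: "DERIV g (G x) :> h x" if "x \<in> S" for x
  proof -
    have "continuous_on S G"
      using G_deriv
      by (intro DERIV_continuous_on[of _ _ "\<lambda>x. 1 / h x"]) (auto intro: has_field_derivative_at_within)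
    moreover have "g (G z) = z" if "z \<in> S" for z
      using G_mono that by (simp add: g_def inv_into_f_f strict_mono_on_imp_inj_on)
    ultimately have "DERIV g (G x) :> inverse (1 / h x)"
      using G_deriv[OF that] that nonzero
      by (intro has_field_derivative_inverse_strong[where f = G and S = S]) (auto simp: S_def)
    then show ?thesis by simp
  qed
  define U where "U = (\<lambda>t. g (G u0 + t))"
  have "U 0 = u0"
    using G_mono by (simp add: U_def g_def S_def inv_into_f_f strict_mono_on_imp_inj_on)
  moreover have "(U has_real_derivative h (U t)) (at t within {0..1})" if t: "t \<in> {0..1}" for t
  proof -
    have "\<forall>x. u0 \<le> x \<and> x \<le> u0 + M \<longrightarrow> isCont G x"
      using G_deriv DERIV_isCont by (force simp: S_def)
    then obtain x where x: "u0 \<le> x" "x \<le> u0 + M" "G x = G u0 + t"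
      using IVT[of G u0 "G u0 + t" "u0 + M"] G_gap M t by auto
    then have "x \<in> S" by (simp add: S_def)
    then have "U t = x"
      using x G_mono by (simp add: U_def g_def inv_into_f_f strict_mono_on_imp_inj_on flip: x(3))
    have "DERIV g (G u0 + t) :> h x"
      using g_deriv[OF \<open>x \<in> S\<close>] x(3) by simp
    then have "(U has_real_derivative h x * 1) (at t within {0..1})"
      unfolding U_def by (rule DERIV_chain2) (auto intro!: derivative_eq_intros)
    with \<open>U t = x\<close> show ?thesis by simp
  qed
  ultimately show ?thesis by blast
qed

lemma growth_solution_exists:
  assumes cont: "continuous_on {0<..} phi" and pos: "\<And>x. x > 0 \<Longrightarrow> phi x > 0"
    and antitone: "\<And>x y. 0 < x \<Longrightarrow> x \<le> y \<Longrightarrow> phi y \<le> phi x"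
  shows "\<exists>X. X 0 = exp u0 \<and> growth_solution phi X"
proof -
  have "continuous_on UNIV (\<lambda>u. phi (exp u))"
    by (rule continuous_on_compose2[OF cont continuous_on_exp]) auto
  moreover have "phi (exp u) > 0" for u using pos by simp
  moreover have "phi (exp u) \<le> phi (exp u0)" if "u0 \<le> u" for u using that by (intro antitone) auto
  ultimately obtain U where U: "U 0 = u0"
    "\<forall>t\<in>{0..1}. (U has_real_derivative phi (exp (U t))) (at t within {0..1})"
    by (metis autonomous_ode_solution_exists)
  have "growth_solution phi (\<lambda>t. exp (U t))"
    unfolding growth_solution_def using U(2) by (auto intro!: derivative_eq_intros)
  then show ?thesis using U(1) by (intro exI[of _ "\<lambda>t. exp (U t)"]) simp
qed

lemma growth_map_eq_solution:
  assumes antitone: "\<And>x y. 0 < x \<Longrightarrow> x \<le> y \<Longrightarrow> phi y \<le> phi x"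
    and X: "X 0 = exp (alphaT * y)" "growth_solution phi X"
  shows "growth_map alphaT phi y = ln (X 1) / alphaT"
proof -
  have "growth_map alphaT phi y = (THE z. \<exists>X'. X' 0 = exp (alphaT * y) \<and> growth_solution phi X'
      \<and> z = ln (X' 1) / alphaT)"
    by (simp add: growth_map_def growth_solution_def)
  also have "\<dots> = ln (X 1) / alphaT"
  proof (rule the_equality)
    show "\<exists>X'. X' 0 = exp (alphaT * y) \<and> growth_solution phi X' \<and> ln (X 1) / alphaT = ln (X' 1) / alphaT"
      using X by blast
    fix z assume "\<exists>X'. X' 0 = exp (alphaT * y) \<and> growth_solution phi X' \<and> z = ln (X' 1) / alphaT"
    then obtain X' where X': "X' 0 = exp (alphaT * y)" "growth_solution phi X'" "z = ln (X' 1) / alphaT"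
      by blast
    have "X' 1 = X 1" using growth_solution_unique[OF antitone X'(2) X(2)] X'(1) X(1) by simp
    then show "z = ln (X 1) / alphaT" using X'(3) by simp
  qed
  finally show ?thesis .
qed

lemma growth_map_ge:
  assumes "alphaT > 0" and cont: "continuous_on {0<..} phi"
    and antitone: "\<And>x y. 0 < x \<Longrightarrow> x \<le> y \<Longrightarrow> phi y \<le> phi x"
    and "r > 0" and ge: "\<And>x. x > 0 \<Longrightarrow> r \<le> phi x"
  shows "y + r / alphaT \<le> growth_map alphaT phi y"
proof -
  have pos: "phi x > 0" if "x > 0" for x using ge[OF that] \<open>r > 0\<close> by linarith
  obtain X where X: "X 0 = exp (alphaT * y)" "growth_solution phi X"
    using growth_solution_exists[OF cont pos antitone, of "alphaT * y"] by blast
  have "alphaT * y + r \<le> ln (X 1)" using growth_solution_ln_increase[OF ge X(2)] X(1) by simp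
  then show ?thesis
    using growth_map_eq_solution[OF antitone X] \<open>alphaT > 0\<close> by (simp add: field_simps)
qed

lemma BED_T_le_BED_O:
  assumes "abT > 0" "abO > 0" "gamma > 0" "d \<ge> 0"
  shows "BED_T abT d \<le> (1 / gamma + abO / (gamma\<^sup>2 * abT)) * BED_O gamma abO d"
proof -
  have "(1 / gamma + abO / (gamma\<^sup>2 * abT)) * BED_O gamma abO d
      = BED_T abT d + gamma * d\<^sup>2 / abO + abO * d / (gamma * abT)"
    using assms unfolding BED_O_def BED_T_def by (simp add: field_simps power2_eq_square)
  moreover have "gamma * d\<^sup>2 / abO \<ge> 0" "abO * d / (gamma * abT) \<ge> 0" using assms by auto
  ultimately show ?thesis by linarith
qed

lemma Yplus_ge:
  assumes "\<And>y. y + delta \<le> F y"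
  shows "Y0 + real n * delta - (\<Sum>k\<le>n. BED_T abT (d k)) \<le> Yplus F abT Y0 d n"
proof (induction n)
  case (Suc n)
  have "Yplus F abT Y0 d n + delta \<le> F (Yplus F abT Y0 d n)" by (rule assms)
  with Suc show ?case by (simp add: algebra_simps)
qed simp

lemma optval_ge:
  assumes "abT > 0" "abO > 0" "gamma > 0" "c \<ge> 0" "N \<ge> 1"
    and growth: "\<And>y. y + delta \<le> F y"
  shows "Y0 + (real N - 1) * delta - (1 / gamma + abO / (gamma\<^sup>2 * abT)) * c
    \<le> optval F abT Y0 gamma abO c N"
proof -
  define K where "K = 1 / gamma + abO / (gamma\<^sup>2 * abT)"
  let ?S = "{Yplus F abT Y0 d (N - 1) | d.
     (\<forall>k<N. d k \<ge> 0) \<and> (\<Sum>k<N. BED_O gamma abO (d k)) \<le> c}"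
  have "Yplus F abT Y0 (\<lambda>_. 0) (N - 1) \<in> ?S" using \<open>c \<ge> 0\<close> by (auto simp: BED_O_def)
  moreover have "Y0 + (real N - 1) * delta - K * c \<le> z" if "z \<in> ?S" for z
  proof -
    obtain d where d: "z = Yplus F abT Y0 d (N - 1)" "\<And>k. k < N \<Longrightarrow> d k \<ge> 0"
      "(\<Sum>k<N. BED_O gamma abO (d k)) \<le> c"
      using \<open>z \<in> ?S\<close> by blast
    have "{..N - 1} = {..<N}" using \<open>N \<ge> 1\<close> by auto
    then have "(\<Sum>k\<le>N - 1. BED_T abT (d k)) \<le> (\<Sum>k<N. K * BED_O gamma abO (d k))"
      using BED_T_le_BED_O assms d(2) by (auto intro: sum_mono simp: K_def)
    also have "\<dots> \<le> K * c"
      using d(3) assms by (auto simp: K_def sum_distrib_left[symmetric] intro: mult_left_mono)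
    finally show ?thesis
      using Yplus_ge[OF growth, of Y0 "N - 1" abT d] d(1) \<open>N \<ge> 1\<close> by (simp add: of_nat_diff)
  qed
  ultimately have "Y0 + (real N - 1) * delta - K * c \<le> Inf ?S" by (intro cInf_greatest) auto
  then show ?thesis by (simp add: optval_def K_def)
qed

lemma filterlim_at_top_imp_ex_min:
  fixes f :: "nat \<Rightarrow> real"
  assumes "filterlim f at_top sequentially"
  shows "\<exists>n\<ge>m. \<forall>k\<ge>m. f n \<le> f k"
proof -
  obtain K where K: "\<And>k. k \<ge> K \<Longrightarrow> f m < f k"
    using assms[unfolded filterlim_at_top_dense, rule_format, of "f m"]
    by (auto simp: eventually_at_top_linorder)
  define n where "n = arg_min_on f {m..max m K}"
  have n_range: "n \<in> {m..max m K}"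
    unfolding n_def by (rule arg_min_if_finite(1)) auto
  have n_min: "f n \<le> f k" if "k \<in> {m..max m K}" for k
    unfolding n_def using that by (intro arg_min_least) auto
  have "f n \<le> f k" if "k \<ge> m" for k
  proof (cases "k \<le> max m K")
    case False
    then have "f m < f k" using K by simp
    then show ?thesis using n_min[of m] by simp
  qed (use n_min that in auto)
  with n_range show ?thesis by auto
qed

theorem theorem4:
  fixes alphaT betaT abO gamma c X0 r :: real and phi :: "real \<Rightarrow> real"
  assumes "alphaT > 0" and "betaT > 0" and "abO > 0"
    and "0 < gamma" and "gamma < 1" and "c > 0" and "X0 > 0"
    and "continuous_on {0<..} phi"
    and "\<And>x y. 0 < x \<Longrightarrow> x \<le> y \<Longrightarrow> phi y \<le> phi x"
    and "r > 0" and "\<And>x. x > 0 \<Longrightarrow> phi x > r"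
  shows "\<exists>Nstar\<ge>1. \<forall>N\<ge>1.
     optval (growth_map alphaT phi) (alphaT / betaT) (ln X0 / alphaT) gamma abO c Nstar
       \<le> optval (growth_map alphaT phi) (alphaT / betaT) (ln X0 / alphaT) gamma abO c N"
proof -
  let ?V = "optval (growth_map alphaT phi) (alphaT / betaT) (ln X0 / alphaT) gamma abO c"
  define delta where "delta = r / alphaT"
  define B where "B = ln X0 / alphaT - delta - (1 / gamma + abO / (gamma\<^sup>2 * (alphaT / betaT))) * c"
  have "delta > 0" using assms by (simp add: delta_def)
  have growth: "y + delta \<le> growth_map alphaT phi y" for y
    unfolding delta_def using assms by (intro growth_map_ge) (auto intro: less_imp_le)
  have "B + real N * delta \<le> ?V N" if "N \<ge> 1" for N
  proof -
    have "B + real N * delta = ln X0 / alphaT + (real N - 1) * delta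
        - (1 / gamma + abO / (gamma\<^sup>2 * (alphaT / betaT))) * c"
      by (simp add: B_def algebra_simps)
    also have "\<dots> \<le> ?V N"
      using assms that by (intro optval_ge growth) auto
    finally show ?thesis .
  qed
  then have "eventually (\<lambda>N. B + real N * delta \<le> ?V N) sequentially"
    by (auto simp: eventually_at_top_linorder)
  moreover from \<open>delta > 0\<close> have "filterlim (\<lambda>N. B + delta * real N) at_top sequentially"
    by (intro filterlim_tendsto_add_at_top[OF tendsto_const]
        filterlim_tendsto_pos_mult_at_top[OF tendsto_const _ filterlim_real_sequentially])
  ultimately have "filterlim ?V at_top sequentially"
    by (auto intro: filterlim_at_top_mono simp: mult.commute)
  then show ?thesis by (rule filterlim_at_top_imp_ex_min)
qed

end
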